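(* Let $n\ge 2$, let $(E,q)$, $E_{\mathbb R}$, the orientation of $E_{\mathbb R}$ and the isotropic map $s\colon\mathbb C^n\to E$ with $s(z)\neq 0$ for $z\neq 0$ be as in the context, and write $s=s_++is_-$ with $s_\pm\colon\mathbb C^n\to E_{\mathbb R}$. Then $$\sqrt e\,(E,s)\;=\;\deg\Big(S^{2n-1}\to S(E_{\mathbb R}),\ z\mapsto \tfrac{s_-(z)}{|s_-(z)|}\Big).$$
   Context: Fix $n\ge2$ and a complex vector space $E$ of dimension $2n$ with a nondegenerate symmetric complex bilinear form $q$. The $n$-dimensional isotropic (maximal isotropic) subspaces of $E$ form two connected components; one is fixed (this is the choice of complex orientation) and its members are called positive, the others negative. Fix a real subspace $E_{\mathbb R}\subset E$ with $E=E_{\mathbb R}\oplus iE_{\mathbb R}$ on which $q$ is real and positive definite, with inner product $\langle\cdot,\cdot\rangle=q|_{E_{\mathbb R}}$. For an orthogonal complex structure $J$ on $E_{\mathbb R}$, $\Lambda_J=\{a-iJa: a\in E_{\mathbb R}\}$ is maximal isotropic; orient $E_{\mathbb R}$ so that $\Lambda_J$ is positive whenever $J$ is compatible with this orientation. Let $s\colon\mathbb C^n\to E$ be continuous with $q(s(z),s(z))=0$ for all $z$ and $s(z)\ne0$ for $z\ne0$. Writing $s=s_++is_-$ with $s_\pm$ valued in $E_{\mathbb R}$, isotropy means $|s_+|=|s_-|$ and $\langle s_+,s_-\rangle=0$, so $s_\pm(z)\neq0$ for $z\ne0$. Orient the unit sphere $S^{2n-1}\subset\mathbb C^n$ as the boundary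 of the unit ball with the complex orientation, and the unit sphere $S(E_{\mathbb R})$ as the boundary of the unit ball of $E_{\mathbb R}$. The orthogonal Hopf index is $\sqrt e\,(E,s):=\deg\big(S^{2n-1}\to S(E_{\mathbb R}),\ z\mapsto s_+(z)/|s_+(z)|\big)\in\mathbb Z$ (for holomorphic $s$ this equals the cosection-localised square root Euler class of Oh–Thomas at the zero $0$). *)

theory Defs
  imports "HOL-Analysis.Analysis" "HOL-Homology.Homology"
begin

(* C^n is modelled as functions nat => complex vanishing from index n on. *)
definition Cn :: "nat \<Rightarrow> (nat \<Rightarrow> complex) set" where
  "Cn n = {z. \<forall>j\<ge>n. z j = 0}"

(* E = E_R (+) i E_R is modelled as pairs (a,b) standing for a + i b, with a,b in E_R = 'e.
   cq is the complex-bilinear extension of the inner product of E_R. *)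
definition cq :: "('e::real_inner \<times> 'e) \<Rightarrow> ('e \<times> 'e) \<Rightarrow> complex" where
  "cq u v = Complex (fst u \<bullet> fst v - snd u \<bullet> snd v) (fst u \<bullet> snd v + snd u \<bullet> fst v)"

(* ordered orthonormal frame b 0, ..., b (m-1) of E_R: fixes the orientation of E_R *)
definition orthonormal_frame :: "nat \<Rightarrow> (nat \<Rightarrow> 'e::real_inner) \<Rightarrow> bool" where
  "orthonormal_frame m b \<longleftrightarrow> (\<forall>i<m. \<forall>j<m. b i \<bullet> b j = (if i = j then 1 else 0))"

(* real coordinates (x_1,y_1,...,x_n,y_n) on C^n: complex orientation *)
definition cplx_unchart :: "nat \<Rightarrow> (nat \<Rightarrow> real) \<Rightarrow> (nat \<Rightarrow> complex)" where
  "cplx_unchart n y = (\<lambda>j. if j < n then Complex (y (2*j)) (y (2*j+1)) else 0)"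

definition frame_coords :: "nat \<Rightarrow> (nat \<Rightarrow> 'e::real_inner) \<Rightarrow> 'e \<Rightarrow> nat \<Rightarrow> real" where
  "frame_coords m b x = (\<lambda>i. if i < m then b i \<bullet> x else 0)"

(* degree of S^{2n-1} -> S(E_R), z |-> f z / |f z|, with the orientations given by the charts *)
definition sphere_map_degree ::
  "nat \<Rightarrow> (nat \<Rightarrow> 'e::real_inner) \<Rightarrow> ((nat \<Rightarrow> complex) \<Rightarrow> 'e) \<Rightarrow> int" where
  "sphere_map_degree n b f =
     Brouwer_degree2 (2*n - 1)
       (\<lambda>y. frame_coords (2*n) b (f (cplx_unchart n y) /\<^sub>R norm (f (cplx_unchart n y))))"

(* orthogonal Hopf index sqrt e (E,s) := degree of s_+ / |s_+| *)
definition orth_hopf_index ::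
  "nat \<Rightarrow> (nat \<Rightarrow> 'e::real_inner) \<Rightarrow> ((nat \<Rightarrow> complex) \<Rightarrow> 'e \<times> 'e) \<Rightarrow> int" where
  "orth_hopf_index n b s = sphere_map_degree n b (\<lambda>z. fst (s z))"

end

theory Submission
  imports Defs
begin

text \<open>Isotropy of \<open>s = s\<^sub>+ + i s\<^sub>-\<close> says that \<open>s\<^sub>+ \<bottom> s\<^sub>-\<close> and \<open>|s\<^sub>+| = |s\<^sub>-|\<close>, so for
  \<open>z \<noteq> 0\<close> the vectors \<open>s\<^sub>+(z)\<close> and \<open>s\<^sub>-(z)\<close> are never antipodal. Hence the straight-line
  homotopy \<open>(1 - t) s\<^sub>+ + t s\<^sub>-\<close> never vanishes on the sphere, and after normalisation it is a
  homotopy between the two sphere maps, which therefore have the same degree.\<close>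

lemma cq_self_eq_0_iff:
  "cq u u = 0 \<longleftrightarrow> fst u \<bullet> snd u = 0 \<and> norm (fst u) = norm (snd u)"
  by (auto simp: cq_def complex_eq_iff inner_commute norm_eq_sqrt_inner)

lemma segment_orthogonal_same_norm_nonzero:
  fixes a c :: "'a::real_inner"
  assumes "a \<bullet> c = 0" "norm a = norm c" "a \<noteq> 0"
  shows "(1 - t) *\<^sub>R a + t *\<^sub>R c \<noteq> 0"
proof -
  have cc: "c \<bullet> c = a \<bullet> a"
    using assms(2) by (simp add: dot_square_norm)
  have "((1 - t) *\<^sub>R a + t *\<^sub>R c) \<bullet> ((1 - t) *\<^sub>R a + t *\<^sub>R c) = ((1 - t)\<^sup>2 + t\<^sup>2) * (a \<bullet> a)"
    using assms(1) cc
    by (simp add: inner_add_left inner_add_right inner_commute power2_eq_square algebra_simps)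
  moreover have "(1 - t)\<^sup>2 + t\<^sup>2 > 0"
    by (simp add: sum_power2_gt_zero_iff)
  ultimately show ?thesis
    using assms(3) by auto
qed

lemma isotropic_segment_nonzero:
  assumes "cq u u = 0" "u \<noteq> 0"
  shows "(1 - t) *\<^sub>R fst u + t *\<^sub>R snd u \<noteq> 0"
proof -
  have "fst u \<bullet> snd u = 0" and same_norm: "norm (fst u) = norm (snd u)"
    using assms(1) by (auto simp: cq_self_eq_0_iff)
  moreover have "fst u \<noteq> 0"
    using assms(2) same_norm by (auto simp: prod_eq_iff)
  ultimately show ?thesis
    by (rule segment_orthogonal_same_norm_nonzero)
qed

lemma sum_frame_coords_power2:
  fixes b :: "nat \<Rightarrow> 'e::euclidean_space"
  assumes "DIM('e) = m" "orthonormal_frame m b"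
  shows "(\<Sum>i<m. (frame_coords m b x i)\<^sup>2) = (norm x)\<^sup>2"
proof -
  have bb: "\<And>i j. i < m \<Longrightarrow> j < m \<Longrightarrow> b i \<bullet> b j = (if i = j then 1 else 0)"
    using assms(2) unfolding orthonormal_frame_def by blast
  have inj: "inj_on b {..<m}"
  proof (rule inj_onI)
    fix i j assume "i \<in> {..<m}" "j \<in> {..<m}" "b i = b j"
    then show "i = j" using bb[of i j] bb[of i i] by (auto split: if_splits)
  qed
  define B where "B = b ` {..<m}"
  have "finite B" by (simp add: B_def)
  have "card B = m" using inj by (simp add: B_def card_image)
  have orth: "pairwise orthogonal B"
    unfolding pairwise_def orthogonal_def B_def using bb by auto
  have unit: "\<And>v. v \<in> B \<Longrightarrow> norm v = 1"
    unfolding B_def using bb by (auto simp: norm_eq_sqrt_inner)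
  then have "independent B"
    using orth pairwise_orthogonal_independent by force
  then have "UNIV \<subseteq> span B"
    using card_eq_dim[of B UNIV] \<open>finite B\<close> \<open>card B = m\<close> assms(1) by (simp add: dim_UNIV)
  then have "x \<in> span B" by blast
  have "(norm x)\<^sup>2 = x \<bullet> (\<Sum>v\<in>B. (x \<bullet> v) *\<^sub>R v)"
    using orthonormal_basis_expand[OF orth unit \<open>x \<in> span B\<close> \<open>finite B\<close>]
    by (simp add: power2_norm_eq_inner)
  also have "\<dots> = (\<Sum>v\<in>B. (x \<bullet> v)\<^sup>2)"
    by (simp add: inner_sum_right power2_eq_square)
  also have "\<dots> = (\<Sum>i<m. (frame_coords m b x i)\<^sup>2)"
    unfolding B_def by (simp add: sum.reindex[OF inj] inner_commute frame_coords_def)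
  finally show ?thesis by simp
qed

lemma frame_coords_in_nsphere:
  fixes b :: "nat \<Rightarrow> 'e::euclidean_space"
  assumes "DIM('e) = Suc p" "orthonormal_frame (Suc p) b" "norm x = 1"
  shows "frame_coords (Suc p) b x \<in> topspace (nsphere p)"
  using sum_frame_coords_power2[OF assms(1,2), of x] assms(3)
  by (simp add: nsphere lessThan_Suc_atMost frame_coords_def)

lemma continuous_on_frame_coords:
  assumes "continuous_on A f"
  shows "continuous_on A (\<lambda>x. frame_coords m b (f x))"
  unfolding frame_coords_def
proof (intro continuous_on_coordinatewise_then_product)
  fix i
  show "continuous_on A (\<lambda>x. if i < m then b i \<bullet> f x else 0)"
    using continuous_on_inner[OF continuous_on_const assms] by (cases "i < m") simp_all
qed

lemma cplx_unchart_in_Cn: "cplx_unchart n y \<in> Cn n"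
  by (simp add: Cn_def cplx_unchart_def)

lemma cplx_unchart_eq_0_iff: "cplx_unchart n y = (\<lambda>_. 0) \<longleftrightarrow> (\<forall>i<2 * n. y i = 0)"
proof
  assume "cplx_unchart n y = (\<lambda>_. 0)"
  then have "\<And>j. j < n \<Longrightarrow> y (2 * j) = 0 \<and> y (2 * j + 1) = 0"
    by (metis cplx_unchart_def complex.inject zero_complex.code)
  moreover have "\<And>i::nat. i = 2 * (i div 2) \<or> i = 2 * (i div 2) + 1" by linarith
  ultimately show "\<forall>i<2 * n. y i = 0"
    by (metis less_mult_imp_div_less mult.commute)
qed (auto simp: cplx_unchart_def fun_eq_iff complex_eq_iff)

lemma cplx_unchart_nsphere_ne_0:
  assumes "Suc p = 2 * n" "y \<in> topspace (nsphere p)"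
  shows "cplx_unchart n y \<noteq> (\<lambda>_. 0)"
proof -
  have "\<exists>i\<le>p. y i \<noteq> 0"
  proof (rule ccontr)
    assume "\<not> (\<exists>i\<le>p. y i \<noteq> 0)"
    then have "(\<Sum>i\<le>p. (y i)\<^sup>2) = 0" by simp
    then show False using assms(2) by (auto simp: nsphere)
  qed
  then show ?thesis
    unfolding cplx_unchart_eq_0_iff using assms(1) le_imp_less_Suc by metis
qed

lemma continuous_on_cplx_unchart: "continuous_on A (cplx_unchart n)"
  unfolding cplx_unchart_def
proof (intro continuous_on_coordinatewise_then_product)
  fix j
  have "continuous_on A (\<lambda>y. complex_of_real (y (2 * j)) + \<i> * complex_of_real (y (2 * j + 1)))"
    by (intro continuous_intros continuous_on_subset[OF continuous_on_product_coordinates]) auto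
  then show "continuous_on A (\<lambda>y. if j < n then Complex (y (2 * j)) (y (2 * j + 1)) else 0)"
    by (cases "j < n") (simp_all add: Complex_eq)
qed

lemma sphere_map_degree_homotopic:
  fixes b :: "nat \<Rightarrow> 'e::euclidean_space"
    and h :: "real \<times> (nat \<Rightarrow> complex) \<Rightarrow> 'e"
  assumes "n \<ge> 1" "DIM('e) = 2 * n" "orthonormal_frame (2 * n) b"
    and "continuous_on ({0..1} \<times> Cn n) h"
    and "\<forall>t\<in>{0..1}. \<forall>z\<in>Cn n. z \<noteq> (\<lambda>_. 0) \<longrightarrow> h (t, z) \<noteq> 0"
  shows "sphere_map_degree n b (\<lambda>z. h (0, z)) = sphere_map_degree n b (\<lambda>z. h (1, z))"
proof -
  define p where "p = 2 * n - 1"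
  have Suc_p: "Suc p = 2 * n" using assms(1) by (simp add: p_def)
  define S where "S = topspace (nsphere p)"
  have nsphere_S: "nsphere p = top_of_set S"
    by (simp add: S_def nsphere euclidean_product_topology)
  define g where "g q = h (fst q, cplx_unchart n (snd q))" for q
  define H where "H q = frame_coords (2 * n) b (g q /\<^sub>R norm (g q))" for q
  have g_nonzero: "g q \<noteq> 0" if "q \<in> {0..1} \<times> S" for q
    using that assms(5) cplx_unchart_in_Cn cplx_unchart_nsphere_ne_0[OF Suc_p]
    by (auto simp: g_def S_def)
  have "continuous_on ({0..1} \<times> S) (\<lambda>q. cplx_unchart n (snd q))"
    by (rule continuous_on_compose2[OF continuous_on_cplx_unchart[of UNIV] continuous_on_snd[OF continuous_on_id]])
      simp
  then have "continuous_on ({0..1} \<times> S) g"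
    unfolding g_def
    by (rule continuous_on_compose2[OF assms(4) continuous_on_Pair[OF continuous_on_fst[OF continuous_on_id]]])
      (auto simp: cplx_unchart_in_Cn)
  then have "continuous_on ({0..1} \<times> S) H"
    unfolding H_def using g_nonzero
    by (intro continuous_on_frame_coords continuous_intros) auto
  moreover have "H q \<in> S" if "q \<in> {0..1} \<times> S" for q
    unfolding H_def S_def
    using frame_coords_in_nsphere[of p b] assms(2,3) g_nonzero[OF that] by (simp add: Suc_p)
  ultimately have "homotopic_with (\<lambda>x. True) (nsphere p) (nsphere p) (\<lambda>y. H (0, y)) (\<lambda>y. H (1, y))"
    unfolding homotopic_with_def nsphere_S by (intro exI[of _ H]) auto
  then show ?thesis
    unfolding sphere_map_degree_def p_def[symmetric] H_def g_def
    by (simp add: Brouwer_degree2_homotopic)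
qed

theorem mainTheorem1:
  fixes n :: nat
    and b :: "nat \<Rightarrow> 'e::euclidean_space"
    and s :: "(nat \<Rightarrow> complex) \<Rightarrow> 'e \<times> 'e"
  assumes "n \<ge> 2"
    and "DIM('e) = 2 * n"
    and "orthonormal_frame (2 * n) b"
    and "continuous_on (Cn n) s"
    and "\<forall>z\<in>Cn n. cq (s z) (s z) = 0"
    and "\<forall>z\<in>Cn n. z \<noteq> (\<lambda>_. 0) \<longrightarrow> s z \<noteq> 0"
  shows "orth_hopf_index n b s = sphere_map_degree n b (\<lambda>z. snd (s z))"
proof -
  define h where "h q = (1 - fst q) *\<^sub>R fst (s (snd q)) + fst q *\<^sub>R snd (s (snd q))" for q
  have "continuous_on ({0..1} \<times> Cn n) h"
    unfolding h_def
    by (intro continuous_intros continuous_on_compose2[OF assms(4)]) auto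
  moreover have "\<forall>t\<in>{0..1}. \<forall>z\<in>Cn n. z \<noteq> (\<lambda>_. 0) \<longrightarrow> h (t, z) \<noteq> 0"
    using assms(5,6) by (simp add: h_def isotropic_segment_nonzero)
  ultimately have "sphere_map_degree n b (\<lambda>z. h (0, z)) = sphere_map_degree n b (\<lambda>z. h (1, z))"
    using assms(1-3) by (intro sphere_map_degree_homotopic) auto
  then show ?thesis
    by (simp add: orth_hopf_index_def h_def)
qed

end
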